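(* Let $G=\{0,g_1,\dots,g_k\}$ be a finite abelian group (with $g_1,\dots,g_k$ its distinct nonzero elements) such that $g_1+\cdots+g_k=0$, and let $\beta$ be a bicharacter of $G$. Let $A$ be a $G$-graded $\beta$-commutative algebra with $A_0=K$, and suppose that the graded monomial $x_{1}^{(g_1)}x_{2}^{(g_2)}\cdots x_{k}^{(g_k)}$ is not a graded polynomial identity of $A$ (i.e. there exist $a_{j}\in A_{g_j}$ with $a_1\cdots a_k\neq 0$). Then $\dim A=|G|$ and $A$ is isomorphic, as a $G$-graded algebra, to a twisted group algebra $K^\alpha G$ for some 2-cocycle $\alpha$.
   Context: All algebras are associative with unit over an algebraically closed field $K$ of characteristic $0$; $G$ is a finite abelian group written additively. A bicharacter of $G$ is a map $\beta\colon G\times G\to K^*$ with $\beta(g,h)=\beta(h,g)^{-1}$, $\beta(g,h+k)=\beta(g,h)\beta(g,k)$, $\beta(g+k,h)=\beta(g,h)\beta(k,h)$. A $G$-graded algebra $C=\bigoplus_g C_g$ is $\beta$-commutative if $c_gc_h=\beta(g,h)c_hc_g$ for all $g,h\in G$, $c_g\in C_g$, $c_h\in C_h$. For a 2-cocycle $\alpha\colon G\times G\to K^*$, the twisted group algebra $K^\alpha G$ has basis $\{X_g\}_{g\in G}$ with $X_gX_h=\alpha(g,h)X_{g+h}$ and grading $(K^\alpha G)_g=KX_g$. Graded polynomial identities are taken in the free $G$-graded algebra on variables $x_i^{(g)}$ of homogeneous degree $g$. *)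

theory Defs
  imports Main "HOL-Computational_Algebra.Polynomial"
begin

definition alg_closed :: "'k::field itself \<Rightarrow> bool" where
  "alg_closed TYPE('k) \<longleftrightarrow> (\<forall>p :: 'k poly. degree p > 0 \<longrightarrow> (\<exists>x. poly p x = 0))"

definition K_algebra :: "('k::field \<Rightarrow> 'a::ring_1 \<Rightarrow> 'a) \<Rightarrow> bool" where
  "K_algebra scale \<longleftrightarrow> vector_space scale \<and>
     (\<forall>c x y. scale c (x * y) = scale c x * y \<and> scale c (x * y) = x * scale c y)"

definition graded_algebra ::
  "('k::field \<Rightarrow> 'a::ring_1 \<Rightarrow> 'a) \<Rightarrow> ('g::{finite,comm_monoid_add} \<Rightarrow> 'a set) \<Rightarrow> bool" where
  "graded_algebra scale Ag \<longleftrightarrow>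
     K_algebra scale \<and>
     (\<forall>g. module.subspace scale (Ag g)) \<and>
     (\<forall>a. \<exists>!c :: 'g \<Rightarrow> 'a. (\<forall>g. c g \<in> Ag g) \<and> a = (\<Sum>g\<in>UNIV. c g)) \<and>
     (\<forall>g h x y. x \<in> Ag g \<longrightarrow> y \<in> Ag h \<longrightarrow> x * y \<in> Ag (g + h))"

definition bicharacter :: "('g::ab_group_add \<Rightarrow> 'g \<Rightarrow> 'k::field) \<Rightarrow> bool" where
  "bicharacter \<beta> \<longleftrightarrow>
     (\<forall>g h. \<beta> g h \<noteq> 0) \<and>
     (\<forall>g h. \<beta> g h = inverse (\<beta> h g)) \<and>
     (\<forall>g h k. \<beta> g (h + k) = \<beta> g h * \<beta> g k) \<and>
     (\<forall>g h k. \<beta> (g + k) h = \<beta> g h * \<beta> k h)"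

definition beta_commutative ::
  "('k::field \<Rightarrow> 'a::ring_1 \<Rightarrow> 'a) \<Rightarrow> ('g \<Rightarrow> 'a set) \<Rightarrow> ('g \<Rightarrow> 'g \<Rightarrow> 'k) \<Rightarrow> bool" where
  "beta_commutative scale Ag \<beta> \<longleftrightarrow>
     (\<forall>g h x y. x \<in> Ag g \<longrightarrow> y \<in> Ag h \<longrightarrow> x * y = scale (\<beta> g h) (y * x))"

definition two_cocycle :: "('g::ab_group_add \<Rightarrow> 'g \<Rightarrow> 'k::field) \<Rightarrow> bool" where
  "two_cocycle \<alpha> \<longleftrightarrow>
     (\<forall>g h. \<alpha> g h \<noteq> 0) \<and>
     (\<forall>g h k. \<alpha> g h * \<alpha> (g + h) k = \<alpha> h k * \<alpha> g (h + k))"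

text \<open>Twisted group algebra K^alpha G, realised on coordinate functions G \<Rightarrow> K
  (f corresponds to \<Sum>g. f g X_g); X_g X_h = alpha g h X_(g+h).\<close>
definition tw_mult :: "('g::{finite,ab_group_add} \<Rightarrow> 'g \<Rightarrow> 'k::field) \<Rightarrow> ('g \<Rightarrow> 'k) \<Rightarrow> ('g \<Rightarrow> 'k) \<Rightarrow> ('g \<Rightarrow> 'k)" where
  "tw_mult \<alpha> f1 f2 = (\<lambda>k. \<Sum>g\<in>UNIV. \<alpha> g (k - g) * f1 g * f2 (k - g))"

definition tw_one :: "('g::{finite,ab_group_add} \<Rightarrow> 'g \<Rightarrow> 'k::field) \<Rightarrow> ('g \<Rightarrow> 'k)" where
  "tw_one \<alpha> = (\<lambda>g. if g = 0 then inverse (\<alpha> 0 0) else 0)"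

definition tw_component :: "'g \<Rightarrow> ('g \<Rightarrow> 'k::field) set" where
  "tw_component g = {f. \<forall>h. h \<noteq> g \<longrightarrow> f h = 0}"

definition graded_iso_twisted ::
  "('k::field \<Rightarrow> 'a::ring_1 \<Rightarrow> 'a) \<Rightarrow> ('g::{finite,ab_group_add} \<Rightarrow> 'a set) \<Rightarrow>
   ('g \<Rightarrow> 'g \<Rightarrow> 'k) \<Rightarrow> ('a \<Rightarrow> ('g \<Rightarrow> 'k)) \<Rightarrow> bool" where
  "graded_iso_twisted scale Ag \<alpha> \<phi> \<longleftrightarrow>
     bij \<phi> \<and>
     (\<forall>x y. \<phi> (x + y) = (\<lambda>g. \<phi> x g + \<phi> y g)) \<and>
     (\<forall>c x. \<phi> (scale c x) = (\<lambda>g. c * \<phi> x g)) \<and>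
     (\<forall>x y. \<phi> (x * y) = tw_mult \<alpha> (\<phi> x) (\<phi> y)) \<and>
     \<phi> 1 = tw_one \<alpha> \<and>
     (\<forall>g. \<phi> ` Ag g = tw_component g)"

end

theory Submission
  imports Defs
begin

text \<open>Write the nonvanishing product as \<open>L a R\<close> with \<open>a\<close> the factor of degree \<open>g\<close>.
  Since the degrees sum to zero, \<open>L a R\<close> is a nonzero scalar, and \<open>\<beta>\<close>-commutativity moves
  \<open>R\<close> to the front: \<open>(R L) a\<close> is a nonzero scalar too. For \<open>x \<in> A\<^sub>g\<close> the product \<open>x (R L)\<close>
  lies in \<open>A\<^sub>0 = K\<close>, so \<open>x\<close> is a multiple of \<open>a\<close>. Hence every component is one-dimensional,
  spanned by an element \<open>u\<^sub>g\<close> that is not a zero divisor, \<open>u\<^sub>g u\<^sub>h = \<alpha>(g,h) u\<^sub>g\<^sub>+\<^sub>h\<close> with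
  \<open>\<alpha>(g,h) \<noteq> 0\<close>, and associativity makes \<open>\<alpha>\<close> a 2-cocycle.\<close>

lemma graded_iso_twisted_inv:
  assumes "bij \<psi>"
    and "\<And>f1 f2. \<psi> (\<lambda>g. f1 g + f2 g) = \<psi> f1 + \<psi> f2"
    and "\<And>c f. \<psi> (\<lambda>g. c * f g) = scale c (\<psi> f)"
    and "\<And>f1 f2. \<psi> (tw_mult \<alpha> f1 f2) = \<psi> f1 * \<psi> f2"
    and "\<psi> (tw_one \<alpha>) = 1"
    and "\<And>g. \<psi> ` tw_component g = Ag g"
  shows "graded_iso_twisted scale Ag \<alpha> (inv \<psi>)"
proof -
  have inj: "inj \<psi>" and surj: "surj \<psi>" using \<open>bij \<psi>\<close> by (auto simp: bij_def)
  have inv_eq: "inv \<psi> x = f" if "\<psi> f = x" for x f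
    using that inv_f_f[OF inj] by blast
  show ?thesis
    unfolding graded_iso_twisted_def
  proof (intro conjI allI)
    show "bij (inv \<psi>)" using \<open>bij \<psi>\<close> by (rule bij_imp_bij_inv)
    show "inv \<psi> (x + y) = (\<lambda>g. inv \<psi> x g + inv \<psi> y g)" for x y
      by (rule inv_eq) (simp add: assms(2) surj_f_inv_f[OF surj])
    show "inv \<psi> (scale c x) = (\<lambda>g. c * inv \<psi> x g)" for c x
      by (rule inv_eq) (simp add: assms(3) surj_f_inv_f[OF surj])
    show "inv \<psi> (x * y) = tw_mult \<alpha> (inv \<psi> x) (inv \<psi> y)" for x y
      by (rule inv_eq) (simp add: assms(4) surj_f_inv_f[OF surj])
    show "inv \<psi> 1 = tw_one \<alpha>" by (rule inv_eq) (rule assms(5))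
    show "inv \<psi> ` Ag g = tw_component g" for g
      using image_inv_f_f[OF inj, of "tw_component g"] assms(6) by simp
  qed
qed

locale connected_graded_algebra =
  fixes scale :: "'k::field \<Rightarrow> 'a::ring_1 \<Rightarrow> 'a"
    and Ag :: "'g::{finite,ab_group_add} \<Rightarrow> 'a set"
  assumes graded: "graded_algebra scale Ag"
    and A0: "Ag 0 = range (\<lambda>c. scale c 1)"
begin

sublocale V: vector_space scale
  using graded unfolding graded_algebra_def K_algebra_def by blast

lemma scale_mult_left: "scale c x * y = scale c (x * y)"
  using graded unfolding graded_algebra_def K_algebra_def by simp

lemma scale_mult_right: "x * scale c y = scale c (x * y)"
  using graded unfolding graded_algebra_def K_algebra_def by metis

lemma subspace_component: "V.subspace (Ag g)"
  using graded unfolding graded_algebra_def by blast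

lemma mult_component: "x \<in> Ag g \<Longrightarrow> y \<in> Ag h \<Longrightarrow> x * y \<in> Ag (g + h)"
  using graded unfolding graded_algebra_def by blast

lemma homogeneous_decomposition:
  "\<exists>!c. (\<forall>g. c g \<in> Ag g) \<and> a = (\<Sum>g\<in>UNIV. c g)"
  using graded unfolding graded_algebra_def by (elim conjE) (rule spec)

lemma homogeneous_decomposition_unique:
  assumes "\<forall>g. c g \<in> Ag g" and "\<forall>g. d g \<in> Ag g" and "sum c UNIV = sum d UNIV"
  shows "c = d"
  using homogeneous_decomposition[of "sum d UNIV"] assms by (elim ex1E) metis

lemma one_in_component_0: "1 \<in> Ag 0"
  using A0 V.scale_one by (metis rangeI)

lemma component_0_scalar:
  assumes "x \<in> Ag 0" obtains c where "x = scale c 1"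
  using assms A0 by blast

lemma prod_list_in_component:
  "length xs = length ds \<Longrightarrow> \<forall>i<length xs. xs ! i \<in> Ag (ds ! i) \<Longrightarrow>
   prod_list xs \<in> Ag (sum_list ds)"
proof (induction xs arbitrary: ds)
  case Nil
  then show ?case using one_in_component_0 by simp
next
  case (Cons x xs)
  then obtain d ds' where ds: "ds = d # ds'" by (cases ds) auto
  have "x \<in> Ag d" using Cons.prems(2) ds by force
  moreover have "prod_list xs \<in> Ag (sum_list ds')"
    using Cons.prems ds by (intro Cons.IH) auto
  ultimately show ?case using mult_component ds by simp
qed

lemma multiple_of_left_invertible:
  assumes a: "a \<in> Ag g" and b: "b \<in> Ag (- g)" and ba: "b * a = scale e 1" and "e \<noteq> 0"
    and x: "x \<in> Ag g"
  shows "\<exists>d. x = scale d a"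
proof -
  have "x * b \<in> Ag 0" using mult_component[OF x b] by simp
  then obtain d where d: "x * b = scale d 1" by (rule component_0_scalar)
  have "scale e x = x * (b * a)" using ba scale_mult_right by simp
  also have "\<dots> = scale d a" using d by (simp add: mult.assoc[symmetric] scale_mult_left)
  finally have "x = scale (inverse e * d) a"
    using \<open>e \<noteq> 0\<close> by (metis V.scale_scale V.scale_one field_class.field_inverse)
  then show ?thesis ..
qed

lemma left_invertible_middle_factor:
  assumes bcomm: "beta_commutative scale Ag \<beta>" and \<beta>_nz: "\<And>g h. \<beta> g h \<noteq> 0"
    and L: "L \<in> Ag l" and a: "a \<in> Ag g" and R: "R \<in> Ag r"
    and degrees: "l + g + r = 0" and nz: "L * a * R \<noteq> 0"
  shows "R * L \<in> Ag (- g) \<and> (\<exists>e. e \<noteq> 0 \<and> R * L * a = scale e 1)"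
proof
  have "r + l = - g" using degrees by (metis add.commute add.assoc add_eq_0_iff2)
  then show "R * L \<in> Ag (- g)"
    using mult_component[OF R L] by simp
  have La: "L * a \<in> Ag (l + g)" by (rule mult_component[OF L a])
  have "L * a * R \<in> Ag 0" using mult_component[OF La R] degrees by simp
  then obtain c where c: "L * a * R = scale c 1" by (rule component_0_scalar)
  have "c \<noteq> 0" using nz c by auto
  have "L * a * R = scale (\<beta> (l + g) r) (R * (L * a))"
    using bcomm La R unfolding beta_commutative_def by blast
  with c have "scale c 1 = scale (\<beta> (l + g) r) (R * (L * a))" by simp
  then have "R * (L * a) = scale (inverse (\<beta> (l + g) r)) (scale c 1)"
    using \<beta>_nz by simp
  then have "R * L * a = scale (inverse (\<beta> (l + g) r) * c) 1"
    by (simp add: mult.assoc)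
  moreover have "inverse (\<beta> (l + g) r) * c \<noteq> 0" using \<open>c \<noteq> 0\<close> \<beta>_nz by simp
  ultimately show "\<exists>e. e \<noteq> 0 \<and> R * L * a = scale e 1" by blast
qed

lemma left_invertible_factor_of_nonzero_product:
  assumes bcomm: "beta_commutative scale Ag \<beta>" and \<beta>_nz: "\<And>g h. \<beta> g h \<noteq> 0"
    and len: "length as = length gs" and hom: "\<forall>j<length gs. as ! j \<in> Ag (gs ! j)"
    and nz: "prod_list as \<noteq> 0" and degrees: "sum_list gs = 0" and j: "j < length gs"
  shows "\<exists>b e. b \<in> Ag (- (gs ! j)) \<and> e \<noteq> 0 \<and> b * as ! j = scale e 1"
proof -
  define L where "L = prod_list (take j as)"
  define R where "R = prod_list (drop (Suc j) as)"
  have L: "L \<in> Ag (sum_list (take j gs))"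
    unfolding L_def by (rule prod_list_in_component) (use len hom j in auto)
  have R: "R \<in> Ag (sum_list (drop (Suc j) gs))"
    unfolding R_def by (rule prod_list_in_component) (use len hom j in auto)
  have "prod_list as = prod_list (take j as @ as ! j # drop (Suc j) as)"
    using len j by (subst id_take_nth_drop[symmetric]) simp_all
  then have "L * as ! j * R \<noteq> 0" using nz by (simp add: L_def R_def mult.assoc)
  moreover have "sum_list (take j gs) + gs ! j + sum_list (drop (Suc j) gs) = 0"
  proof -
    have "sum_list gs = sum_list (take j gs @ gs ! j # drop (Suc j) gs)"
      using j by (subst id_take_nth_drop[symmetric]) simp_all
    then show ?thesis using degrees by (simp add: add.assoc)
  qed
  ultimately show ?thesis
    using left_invertible_middle_factor[OF bcomm \<beta>_nz L _ R] hom j by blast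
qed

end

locale homogeneous_unit_basis = connected_graded_algebra +
  fixes u
  assumes u_in: "u g \<in> Ag g"
    and u_0: "u 0 = 1"
    and u_spans: "x \<in> Ag g \<Longrightarrow> \<exists>d. x = scale d (u g)"
    and u_left_invertible: "\<exists>b e. e \<noteq> 0 \<and> b * u g = scale e 1"
begin

lemma u_not_zero_divisor: "y \<noteq> 0 \<Longrightarrow> u g * y \<noteq> 0"
proof
  assume "y \<noteq> 0" and "u g * y = 0"
  obtain b e where "e \<noteq> 0" and "b * u g = scale e 1" using u_left_invertible by blast
  then have "scale e y = b * (u g * y)" by (simp add: mult.assoc[symmetric] scale_mult_left)
  with \<open>u g * y = 0\<close> \<open>e \<noteq> 0\<close> \<open>y \<noteq> 0\<close> show False by simp
qed

lemma u_nonzero: "u g \<noteq> 0"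
  using u_not_zero_divisor[of 1 g] by simp

definition twist where
  "twist g h = (SOME d. u g * u h = scale d (u (g + h)))"

lemma u_mult: "u g * u h = scale (twist g h) (u (g + h))"
  unfolding twist_def by (rule someI_ex, rule u_spans, intro mult_component u_in)

lemma twist_nonzero: "twist g h \<noteq> 0"
  using u_mult[of g h] u_not_zero_divisor[OF u_nonzero] by auto

lemma twist_0_0: "twist 0 0 = 1"
proof -
  have "scale (twist 0 0) (u 0) = scale 1 (u 0)" using u_mult[of 0 0] u_0 by simp
  then show ?thesis by (rule V.scale_right_imp_eq[OF u_nonzero])
qed

lemma two_cocycle_twist: "two_cocycle twist"
  unfolding two_cocycle_def
proof (intro conjI allI)
  fix g h k
  have "scale (twist g h * twist (g + h) k) (u (g + h + k)) = (u g * u h) * u k"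
    by (simp add: u_mult scale_mult_left)
  also have "\<dots> = u g * (u h * u k)" by (rule mult.assoc)
  also have "\<dots> = scale (twist h k * twist g (h + k)) (u (g + h + k))"
    by (simp add: u_mult scale_mult_right add.assoc mult.commute)
  finally show "twist g h * twist (g + h) k = twist h k * twist g (h + k)"
    by (rule V.scale_right_imp_eq[OF u_nonzero])
qed (rule twist_nonzero)

definition coord_sum where
  "coord_sum f = (\<Sum>g\<in>UNIV. scale (f g) (u g))"

lemma scale_u_in: "scale c (u g) \<in> Ag g"
  using V.subspace_scale[OF subspace_component u_in] .

lemma inj_coord_sum: "inj coord_sum"
proof (rule injI)
  fix f1 f2 assume "coord_sum f1 = coord_sum f2"
  then have "(\<lambda>g. scale (f1 g) (u g)) = (\<lambda>g. scale (f2 g) (u g))"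
    unfolding coord_sum_def by (intro homogeneous_decomposition_unique) (auto simp: scale_u_in)
  then show "f1 = f2"
    using V.scale_right_imp_eq[OF u_nonzero] by (auto simp: fun_eq_iff dest: fun_cong)
qed

lemma surj_coord_sum: "surj coord_sum"
proof -
  have "a \<in> range coord_sum" for a
  proof -
    obtain c where c: "\<forall>g. c g \<in> Ag g" "a = sum c UNIV"
      using homogeneous_decomposition by blast
    then have "\<forall>g. \<exists>d. c g = scale d (u g)" using u_spans by blast
    then obtain d where "\<forall>g. c g = scale (d g) (u g)" by metis
    then have "a = coord_sum d" unfolding coord_sum_def using c by simp
    then show ?thesis by simp
  qed
  then show ?thesis by auto
qed

lemma coord_sum_add: "coord_sum (\<lambda>g. f1 g + f2 g) = coord_sum f1 + coord_sum f2"
  unfolding coord_sum_def by (simp add: V.scale_left_distrib sum.distrib)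

lemma coord_sum_scale: "coord_sum (\<lambda>g. c * f g) = scale c (coord_sum f)"
  unfolding coord_sum_def by (simp add: V.scale_sum_right)

lemma coord_sum_tw_mult: "coord_sum (tw_mult twist f1 f2) = coord_sum f1 * coord_sum f2"
proof -
  have "coord_sum (tw_mult twist f1 f2) =
        (\<Sum>g\<in>UNIV. \<Sum>k\<in>UNIV. scale (twist g (k - g) * f1 g * f2 (k - g)) (u k))"
    unfolding coord_sum_def tw_mult_def by (subst sum.swap) (simp add: V.scale_sum_left)
  also have "\<dots> = (\<Sum>g\<in>UNIV. \<Sum>h\<in>UNIV. scale (twist g h * f1 g * f2 h) (u (g + h)))"
  proof (rule sum.cong[OF refl])
    fix g
    show "(\<Sum>k\<in>UNIV. scale (twist g (k - g) * f1 g * f2 (k - g)) (u k)) =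
          (\<Sum>h\<in>UNIV. scale (twist g h * f1 g * f2 h) (u (g + h)))"
      by (rule sum.reindex_bij_witness[where i="\<lambda>h. g + h" and j="\<lambda>k. k - g"]) auto
  qed
  also have "\<dots> = (\<Sum>g\<in>UNIV. \<Sum>h\<in>UNIV. scale (f1 g) (u g) * scale (f2 h) (u h))"
    by (simp add: scale_mult_left scale_mult_right u_mult mult.commute mult.left_commute)
  also have "\<dots> = coord_sum f1 * coord_sum f2"
    unfolding coord_sum_def by (rule sum_product[symmetric])
  finally show ?thesis .
qed

lemma coord_sum_delta: "coord_sum (\<lambda>h. if h = g then d else 0) = scale d (u g)"
proof -
  have "coord_sum (\<lambda>h. if h = g then d else 0) = (\<Sum>h\<in>UNIV. if h = g then scale d (u g) else 0)"
    unfolding coord_sum_def by (intro sum.cong) auto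
  then show ?thesis by simp
qed

lemma coord_sum_tw_one: "coord_sum (tw_one twist) = 1"
  unfolding tw_one_def twist_0_0 inverse_1 coord_sum_delta u_0 by simp

lemma coord_sum_tw_component: "coord_sum ` tw_component g = Ag g"
proof
  show "coord_sum ` tw_component g \<subseteq> Ag g"
  proof
    fix x assume "x \<in> coord_sum ` tw_component g"
    then obtain f where "f \<in> tw_component g" and x: "x = coord_sum f" by blast
    then have "f = (\<lambda>h. if h = g then f g else 0)" unfolding tw_component_def by auto
    then have "x = scale (f g) (u g)" using x coord_sum_delta by metis
    then show "x \<in> Ag g" using scale_u_in by simp
  qed
  show "Ag g \<subseteq> coord_sum ` tw_component g"
  proof
    fix x assume "x \<in> Ag g"
    then obtain d where "x = scale d (u g)" using u_spans by blast
    then have "x = coord_sum (\<lambda>h. if h = g then d else 0)" using coord_sum_delta by simp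
    moreover have "(\<lambda>h. if h = g then d else 0) \<in> tw_component g"
      unfolding tw_component_def by auto
    ultimately show "x \<in> coord_sum ` tw_component g" by blast
  qed
qed

lemma inj_u: "inj u"
proof (rule injI)
  fix g h assume "u g = u h"
  then have "u g \<in> Ag h" using u_in[of h] by simp
  then have "(\<lambda>k. if k = g then u g else 0) = (\<lambda>k. if k = h then u g else 0)"
    using u_in V.subspace_0[OF subspace_component]
    by (intro homogeneous_decomposition_unique) auto
  then show "g = h" using u_nonzero by (metis (mono_tags))
qed

lemma span_range_u: "V.span (range u) = UNIV"
proof -
  have "coord_sum f \<in> V.span (range u)" for f
    unfolding coord_sum_def by (intro V.span_sum V.span_scale V.span_base) simp
  then show ?thesis using surj_coord_sum by (metis UNIV_I UNIV_eq_I surjD)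
qed

lemma independent_range_u: "\<not> V.dependent (range u)"
  unfolding V.dependent_explicit
proof
  assume "\<exists>t c. finite t \<and> t \<subseteq> range u \<and> (\<Sum>v\<in>t. scale (c v) v) = 0 \<and> (\<exists>v\<in>t. c v \<noteq> 0)"
  then obtain t c g where t: "t \<subseteq> range u" "(\<Sum>v\<in>t. scale (c v) v) = 0"
    and g: "u g \<in> t" "c (u g) \<noteq> 0"
    by blast
  define f where "f h = (if u h \<in> t then c (u h) else 0)" for h
  have "coord_sum f = (\<Sum>h\<in>u -` t. scale (c (u h)) (u h))"
    unfolding coord_sum_def f_def by (rule sum.mono_neutral_cong_right) auto
  also have "\<dots> = (\<Sum>v\<in>u ` (u -` t). scale (c v) v)"
    by (rule sum.reindex_cong[where l=u, symmetric]) (simp_all add: inj_on_subset[OF inj_u])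
  also have "u ` (u -` t) = t" using t(1) by auto
  finally have "coord_sum f = coord_sum (\<lambda>_. 0)" using t(2) unfolding coord_sum_def by simp
  then have "f = (\<lambda>_. 0)" using inj_coord_sum by (simp add: inj_eq)
  then have "f g = 0" by simp
  then show False using g unfolding f_def by simp
qed

end

context connected_graded_algebra
begin

lemma homogeneous_unit_basis_from_nonzero_product:
  assumes bcomm: "beta_commutative scale Ag \<beta>" and \<beta>_nz: "\<And>g h. \<beta> g h \<noteq> 0"
    and gs: "set gs = UNIV - {0}" and degrees: "sum_list gs = 0"
    and len: "length as = length gs" and hom: "\<forall>j<length gs. as ! j \<in> Ag (gs ! j)"
    and nz: "prod_list as \<noteq> 0"
  shows "\<exists>u. homogeneous_unit_basis scale Ag u"
proof -
  have "\<forall>g. \<exists>j. g \<noteq> 0 \<longrightarrow> j < length gs \<and> gs ! j = g"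
  proof
    fix g
    have "g \<noteq> 0 \<Longrightarrow> g \<in> set gs" using gs by blast
    then show "\<exists>j. g \<noteq> 0 \<longrightarrow> j < length gs \<and> gs ! j = g" by (auto simp: in_set_conv_nth)
  qed
  then obtain idx where idx: "\<And>g. g \<noteq> 0 \<Longrightarrow> idx g < length gs \<and> gs ! idx g = g"
    by metis
  define u where "u g = (if g = 0 then 1 else as ! idx g)" for g
  have nonzero_degree: "u g \<in> Ag g \<and> (\<exists>b e. b \<in> Ag (- g) \<and> e \<noteq> 0 \<and> b * u g = scale e 1)"
    if "g \<noteq> 0" for g
  proof -
    have "idx g < length gs" and "gs ! idx g = g" using idx[OF that] by blast+
    moreover note left_invertible_factor_of_nonzero_product[OF bcomm \<beta>_nz len hom nz degrees]
    ultimately show ?thesis using hom that unfolding u_def by metis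
  qed
  show ?thesis
  proof (intro exI, unfold_locales)
    show "u g \<in> Ag g" for g
      using nonzero_degree one_in_component_0 u_def by (cases "g = 0") auto
    show "u 0 = 1" by (simp add: u_def)
    show "\<exists>d. x = scale d (u g)" if "x \<in> Ag g" for x g
    proof (cases "g = 0")
      case True
      then show ?thesis using that A0 u_def by auto
    next
      case False
      then show ?thesis using that nonzero_degree multiple_of_left_invertible by blast
    qed
    show "\<exists>b e. e \<noteq> 0 \<and> b * u g = scale e 1" for g
      using nonzero_degree[of g] u_def by (cases "g = 0") (auto intro: exI[of _ 1])
  qed
qed

end

theorem theorem4p2:
  fixes scale :: "'k::field_char_0 \<Rightarrow> 'a::ring_1 \<Rightarrow> 'a"
    and Ag :: "'g::{finite,ab_group_add} \<Rightarrow> 'a set"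
    and \<beta> :: "'g \<Rightarrow> 'g \<Rightarrow> 'k"
    and gs :: "'g list"
  assumes K_closed: "alg_closed TYPE('k)"
    and graded: "graded_algebra scale Ag"
    and bichar: "bicharacter \<beta>"
    and bcomm: "beta_commutative scale Ag \<beta>"
    and A0: "Ag 0 = range (\<lambda>c. scale c 1)"
    and gs_enum: "distinct gs" "set gs = UNIV - {0}"
    and gs_sum: "sum_list gs = 0"
    and non_PI: "\<exists>as :: 'a list. length as = length gs \<and>
                   (\<forall>j < length gs. as ! j \<in> Ag (gs ! j)) \<and> prod_list as \<noteq> 0"
  shows "(\<exists>B. finite B \<and> \<not> module.dependent scale B \<and>
              module.span scale B = UNIV \<and> card B = card (UNIV :: 'g set)) \<and>
         (\<exists>\<alpha> \<phi>. two_cocycle \<alpha> \<and> graded_iso_twisted scale Ag \<alpha> \<phi>)"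
proof -
  interpret connected_graded_algebra scale Ag using graded A0 by unfold_locales
  have \<beta>_nz: "\<And>g h. \<beta> g h \<noteq> 0" using bichar unfolding bicharacter_def by blast
  obtain as where "length as = length gs" "\<forall>j<length gs. as ! j \<in> Ag (gs ! j)"
    "prod_list as \<noteq> 0"
    using non_PI by blast
  then obtain u where "homogeneous_unit_basis scale Ag u"
    using homogeneous_unit_basis_from_nonzero_product[OF bcomm \<beta>_nz gs_enum(2) gs_sum] by blast
  then interpret homogeneous_unit_basis scale Ag u .
  have "graded_iso_twisted scale Ag twist (inv coord_sum)"
    using inj_coord_sum surj_coord_sum coord_sum_add coord_sum_scale coord_sum_tw_mult
      coord_sum_tw_one coord_sum_tw_component
    by (intro graded_iso_twisted_inv) (auto simp: bij_def)
  moreover have "card (range u) = card (UNIV :: 'g set)"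
    using inj_u by (simp add: card_image)
  ultimately show ?thesis
    using span_range_u independent_range_u two_cocycle_twist by (intro conjI exI) auto
qed

end
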